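(* Let $k$ be a positive integer and $I \subseteq \{1,\dots,k\}$. Let $G$ be a $(26k+24|I|)$-connected graph and let $S = \{\{s_1,t_1\},\dots,\{s_k,t_k\}\}$ where $s_1,\dots,s_k,t_1,\dots,t_k$ are $2k$ distinct vertices of $G$. Then some nice partition of $G$ has a parity breaking matching for $(S,I)$ if and only if every nice partition of $G$ has a parity breaking matching for $(S,I)$.
   Context: All graphs are finite and simple. A partition $(A,B)$ of $G$ is a partition of $V(G)$ into two sets $A,B$. For such a partition, $G_{A,B}$ denotes the graph $G[A] \cup G[B]$, i.e. the graph whose edges are the edges of $G$ with both ends in $A$ or both ends in $B$. An odd cycle cover of $G$ is a set $X \subseteq V(G)$ such that $G - X$ is bipartite; it is minimum if it has the smallest possible size. A partition $(A,B)$ of $G$ is nice if there is a minimum odd cycle cover $X$ of $G$ such that $A \setminus X$ and $B \setminus X$ are both independent sets of $G$, every vertex of $X$ having more neighbours in $B\setminus X$ than in $A \setminus X$ lies in $A$, and every vertex of $X$ having more neighbours in $A\setminus X$ than in $B\setminus X$ lies in $B$. For $S = \{\{s_1,t_1\},\dots,\{s_k,t_k\}\}$ and $I \subseteq \{1,\dots,k\}$, a parity breaking matching for $(S,I)$ with respect to a partition $(A,B)$ is a matching $M = \{m_i\}_{i \in I}$ of $G$ (indexed by $I$) with $M \subseteq E(G_{A,B})$ such that $m_i \cap \{s_j,t_j\} = \emptyset$ for all $i \in I$ and all $j \in \{1,\dots,k\}$ with $j \neq i$. *)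

theory Defs
  imports Main
begin

definition graph :: "'a set \<Rightarrow> 'a set set \<Rightarrow> bool" where
  "graph V E \<longleftrightarrow> finite V \<and> (\<forall>e\<in>E. e \<subseteq> V \<and> card e = 2)"

definition adj :: "'a set set \<Rightarrow> 'a \<Rightarrow> 'a \<Rightarrow> bool" where
  "adj E u v \<longleftrightarrow> {u, v} \<in> E"

text \<open>The subgraph induced on W is connected (the empty graph counts as connected here;
  irrelevant below since k-connectivity requires more than k vertices).\<close>
definition connected_on :: "'a set set \<Rightarrow> 'a set \<Rightarrow> bool" where
  "connected_on E W \<longleftrightarrow>
     (\<forall>u\<in>W. \<forall>v\<in>W. (u, v) \<in> {(x, y). x \<in> W \<and> y \<in> W \<and> adj E x y}\<^sup>*)"

definition k_connected :: "'a set \<Rightarrow> 'a set set \<Rightarrow> nat \<Rightarrow> bool" where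
  "k_connected V E n \<longleftrightarrow> card V > n \<and>
     (\<forall>X. X \<subseteq> V \<and> card X < n \<longrightarrow> connected_on E (V - X))"

definition independent :: "'a set set \<Rightarrow> 'a set \<Rightarrow> bool" where
  "independent E W \<longleftrightarrow> (\<forall>u\<in>W. \<forall>v\<in>W. \<not> adj E u v)"

definition bipartite_on :: "'a set set \<Rightarrow> 'a set \<Rightarrow> bool" where
  "bipartite_on E W \<longleftrightarrow> (\<exists>P Q. P \<union> Q = W \<and> P \<inter> Q = {} \<and> independent E P \<and> independent E Q)"

definition odd_cycle_cover :: "'a set \<Rightarrow> 'a set set \<Rightarrow> 'a set \<Rightarrow> bool" where
  "odd_cycle_cover V E X \<longleftrightarrow> X \<subseteq> V \<and> bipartite_on E (V - X)"

definition min_odd_cycle_cover :: "'a set \<Rightarrow> 'a set set \<Rightarrow> 'a set \<Rightarrow> bool" where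
  "min_odd_cycle_cover V E X \<longleftrightarrow> odd_cycle_cover V E X \<and>
     (\<forall>Y. odd_cycle_cover V E Y \<longrightarrow> card X \<le> card Y)"

definition nbrs :: "'a set set \<Rightarrow> 'a \<Rightarrow> 'a set" where
  "nbrs E v = {u. adj E v u}"

definition partition2 :: "'a set \<Rightarrow> 'a set \<Rightarrow> 'a set \<Rightarrow> bool" where
  "partition2 V A B \<longleftrightarrow> A \<union> B = V \<and> A \<inter> B = {}"

definition nice_partition :: "'a set \<Rightarrow> 'a set set \<Rightarrow> 'a set \<Rightarrow> 'a set \<Rightarrow> bool" where
  "nice_partition V E A B \<longleftrightarrow> partition2 V A B \<and>
     (\<exists>X. min_odd_cycle_cover V E X \<and>
          independent E (A - X) \<and> independent E (B - X) \<and>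
          (\<forall>v\<in>X. card (nbrs E v \<inter> (B - X)) > card (nbrs E v \<inter> (A - X)) \<longrightarrow> v \<in> A) \<and>
          (\<forall>v\<in>X. card (nbrs E v \<inter> (A - X)) > card (nbrs E v \<inter> (B - X)) \<longrightarrow> v \<in> B))"

definition parity_breaking_matching ::
  "'a set set \<Rightarrow> nat \<Rightarrow> (nat \<Rightarrow> 'a) \<Rightarrow> (nat \<Rightarrow> 'a) \<Rightarrow> nat set \<Rightarrow> 'a set \<Rightarrow> 'a set \<Rightarrow> (nat \<Rightarrow> 'a set) \<Rightarrow> bool" where
  "parity_breaking_matching E k s t I A B m \<longleftrightarrow>
     (\<forall>i\<in>I. m i \<in> E \<and> (m i \<subseteq> A \<or> m i \<subseteq> B)) \<and>
     (\<forall>i\<in>I. \<forall>j\<in>I. i \<noteq> j \<longrightarrow> m i \<inter> m j = {}) \<and>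
     (\<forall>i\<in>I. \<forall>j\<in>{1..k}. j \<noteq> i \<longrightarrow> m i \<inter> {s j, t j} = {})"

definition has_pbm :: "'a set set \<Rightarrow> nat \<Rightarrow> (nat \<Rightarrow> 'a) \<Rightarrow> (nat \<Rightarrow> 'a) \<Rightarrow> nat set \<Rightarrow> 'a set \<Rightarrow> 'a set \<Rightarrow> bool" where
  "has_pbm E k s t I A B \<longleftrightarrow> (\<exists>m. parity_breaking_matching E k s t I A B m)"

end

theory Submission
  imports Defs
begin

text \<open>
  Let X and X' be minimum odd cycle covers witnessing two nice partitions (A,B) and (A',B'),
  and let \<tau> be their common size. If \<tau> \<ge> 2k + 2|I|, every partition whatsoever has a parity
  breaking matching: fewer than \<tau> vertices cannot meet every edge of G_{A,B} (else they would
  form a smaller odd cycle cover), so edges of G_{A,B} avoiding the terminals and each other can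
  be chosen greedily. Otherwise R = V - (X \<union> X') is connected, and both partitions properly
  2-colour G[R], so after possibly swapping A' and B' they agree on R. Since every vertex has
  degree at least 26k + 24|I|, the niceness conditions force a vertex with few R-neighbours in
  one class into that same class in both partitions. Hence matching edges made of such vertices
  stay in G_{A',B'}, and every other matching edge is replaced by an edge from a balanced
  endpoint to a fresh R-neighbour in its class.
\<close>

definition nice_partition_wrt :: "'a set \<Rightarrow> 'a set set \<Rightarrow> 'a set \<Rightarrow> 'a set \<Rightarrow> 'a set \<Rightarrow> bool" where
  "nice_partition_wrt V E A B X \<longleftrightarrow> partition2 V A B \<and> min_odd_cycle_cover V E X \<and>
     independent E (A - X) \<and> independent E (B - X) \<and>
     (\<forall>v\<in>X. card (nbrs E v \<inter> (B - X)) > card (nbrs E v \<inter> (A - X)) \<longrightarrow> v \<in> A) \<and>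
     (\<forall>v\<in>X. card (nbrs E v \<inter> (A - X)) > card (nbrs E v \<inter> (B - X)) \<longrightarrow> v \<in> B)"

lemma nice_partition_iff_wrt: "nice_partition V E A B \<longleftrightarrow> (\<exists>X. nice_partition_wrt V E A B X)"
  unfolding nice_partition_def nice_partition_wrt_def by blast

lemma nice_partition_wrt_swap: "nice_partition_wrt V E A B X \<Longrightarrow> nice_partition_wrt V E B A X"
  unfolding nice_partition_wrt_def partition2_def by blast

lemma parity_breaking_matching_swap:
  "parity_breaking_matching E k s t I A B m \<Longrightarrow> parity_breaking_matching E k s t I B A m"
  unfolding parity_breaking_matching_def by auto

lemma has_pbm_swap: "has_pbm E k s t I A B \<Longrightarrow> has_pbm E k s t I B A"
  unfolding has_pbm_def using parity_breaking_matching_swap by blast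

lemma card_le_if_subset_Un:
  assumes "S \<subseteq> P \<union> Q" "finite P" "finite Q"
  shows "card S \<le> card P + card Q"
  using assms card_Un_le[of P Q] card_mono[of "P \<union> Q" S] by simp

lemma card_terminals_le: "card (s ` {1..k} \<union> t ` {1..k}) \<le> 2 * k"
  using card_Un_le[of "s ` {1..k}" "t ` {1..k}"] card_image_le[of "{1..k}" s]
    card_image_le[of "{1..k}" t] by simp

lemma subset_class_if_agree:
  assumes "partition2 V A B" "partition2 V A' B'" "e \<subseteq> V" "e \<subseteq> A \<or> e \<subseteq> B"
    and "\<forall>v\<in>e. v \<in> A \<longleftrightarrow> v \<in> A'"
  shows "e \<subseteq> A' \<or> e \<subseteq> B'"
proof -
  have "e \<subseteq> B'" if "e \<subseteq> B"
  proof
    fix v assume "v \<in> e"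
    then have "v \<in> V" "v \<notin> A'" using assms(1,3,5) that unfolding partition2_def by auto
    then show "v \<in> B'" using assms(2) unfolding partition2_def by blast
  qed
  moreover have "e \<subseteq> A'" if "e \<subseteq> A" using assms(5) that by blast
  ultimately show ?thesis using assms(4) by blast
qed

lemma graph_adjD:
  assumes "graph V E" "adj E u v"
  shows "u \<in> V" "v \<in> V" "u \<noteq> v"
proof -
  have "{u, v} \<subseteq> V" "card {u, v} = 2"
    using assms unfolding graph_def adj_def by auto
  then show "u \<in> V" "v \<in> V" "u \<noteq> v" by auto
qed

lemma graph_edgeD:
  assumes "graph V E" "e \<in> E"
  shows "e \<subseteq> V" "card e = 2" "finite e"
  using assms unfolding graph_def by (auto intro: card_ge_0_finite)

lemma nbrs_subset: "graph V E \<Longrightarrow> nbrs E v \<subseteq> V"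
  unfolding nbrs_def using graph_adjD(2) by fast

lemma finite_nbrs: "graph V E \<Longrightarrow> finite (nbrs E v)"
  using nbrs_subset finite_subset unfolding graph_def by metis

lemma card_nbrs_ge_if_k_connected:
  assumes g: "graph V E" and conn: "k_connected V E n" and v: "v \<in> V"
  shows "n \<le> card (nbrs E v)"
proof (rule ccontr)
  let ?N = "nbrs E v"
  assume "\<not> n \<le> card ?N"
  then have small: "card ?N < n" by simp
  have "finite V" using g unfolding graph_def by simp
  have N: "?N \<subseteq> V" "v \<notin> ?N"
    using nbrs_subset[OF g] graph_adjD(3)[OF g] unfolding nbrs_def by auto
  have "connected_on E (V - ?N)" using conn small N unfolding k_connected_def by blast
  have "card (V - ?N) \<ge> 2"
    using conn small N \<open>finite V\<close> card_Diff_subset[of ?N V] finite_subset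
    unfolding k_connected_def by fastforce
  have "V - ?N - {v} \<noteq> {}"
  proof
    assume "V - ?N - {v} = {}"
    then have "card (V - ?N) \<le> card {v}" by (intro card_mono) auto
    then show False using \<open>card (V - ?N) \<ge> 2\<close> by simp
  qed
  then obtain w where w: "w \<in> V - ?N" "w \<noteq> v" by blast
  have "(v, w) \<in> {(x, y). x \<in> V - ?N \<and> y \<in> V - ?N \<and> adj E x y}\<^sup>*"
    using \<open>connected_on E (V - ?N)\<close> w v N unfolding connected_on_def by blast
  then show False
  proof (cases rule: converse_rtranclE)
    case base then show ?thesis using w by simp
  next
    case (step y) then show ?thesis unfolding nbrs_def by simp
  qed
qed

subsection \<open>Minimum odd cycle covers and nice partitions\<close>

lemma min_odd_cycle_cover_exists: "\<exists>X. min_odd_cycle_cover V E X"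
proof -
  have "odd_cycle_cover V E V"
    unfolding odd_cycle_cover_def bipartite_on_def independent_def by auto
  then obtain X where X: "odd_cycle_cover V E X"
    and "card X = (LEAST n. \<exists>Y. odd_cycle_cover V E Y \<and> card Y = n)"
    using LeastI_ex[of "\<lambda>n. \<exists>Y. odd_cycle_cover V E Y \<and> card Y = n"] by blast
  then have "card X \<le> card Y" if "odd_cycle_cover V E Y" for Y
    using that by (auto intro: Least_le)
  then show ?thesis using X unfolding min_odd_cycle_cover_def by blast
qed

lemma card_min_odd_cycle_cover_eq:
  "min_odd_cycle_cover V E X \<Longrightarrow> min_odd_cycle_cover V E Y \<Longrightarrow> card X = card Y"
  unfolding min_odd_cycle_cover_def by (meson le_antisym)

lemma nice_partition_exists: "\<exists>A B. nice_partition V E A B"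
proof -
  obtain X where X: "min_odd_cycle_cover V E X" using min_odd_cycle_cover_exists by blast
  then obtain P Q where PQ: "P \<union> Q = V - X" "P \<inter> Q = {}" "independent E P" "independent E Q"
    and "X \<subseteq> V"
    unfolding min_odd_cycle_cover_def odd_cycle_cover_def bipartite_on_def by blast
  define XA where "XA = {v\<in>X. card (nbrs E v \<inter> Q) > card (nbrs E v \<inter> P)}"
  have "P \<union> XA - X = P" "Q \<union> (X - XA) - X = Q" using PQ unfolding XA_def by blast+
  moreover have "partition2 V (P \<union> XA) (Q \<union> (X - XA))"
    unfolding partition2_def XA_def using PQ \<open>X \<subseteq> V\<close> by blast
  ultimately have "nice_partition_wrt V E (P \<union> XA) (Q \<union> (X - XA)) X"
    unfolding nice_partition_wrt_def using X PQ by (auto simp: XA_def)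
  then show ?thesis using nice_partition_iff_wrt by blast
qed

lemma edge_avoiding_if_card_less_min_odd_cycle_cover:
  assumes X: "min_odd_cycle_cover V E X" and p: "partition2 V A B"
    and F: "finite F" "card F < card X"
  shows "\<exists>e\<in>E. (e \<subseteq> A \<or> e \<subseteq> B) \<and> e \<inter> F = {}"
proof (rule ccontr)
  assume no_edge: "\<not> ?thesis"
  have "independent E (C - F)" if C: "C = A \<or> C = B" for C
    unfolding independent_def
  proof (intro ballI notI)
    fix u v assume "u \<in> C - F" "v \<in> C - F" "adj E u v"
    then have "{u, v} \<in> E" "{u, v} \<subseteq> C" "{u, v} \<inter> F = {}" unfolding adj_def by auto
    then show False using no_edge C by blast
  qed
  moreover have "(A - F) \<union> (B - F) = V - F \<inter> V" "(A - F) \<inter> (B - F) = {}"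
    using p unfolding partition2_def by blast+
  ultimately have "odd_cycle_cover V E (F \<inter> V)"
    unfolding odd_cycle_cover_def bipartite_on_def by (metis inf_le2)
  then have "card X \<le> card (F \<inter> V)" using X unfolding min_odd_cycle_cover_def by blast
  also have "\<dots> \<le> card F" using F by (simp add: card_mono)
  finally show False using F by linarith
qed

lemma exists_pairwise_disjoint_2_sets:
  assumes "finite I" "finite F0" "card F0 + 2 * card I \<le> N"
    and avoid: "\<And>F. finite F \<Longrightarrow> card F < N \<Longrightarrow> \<exists>e. P e \<and> card e = 2 \<and> e \<inter> F = {}"
  shows "\<exists>m. (\<forall>i\<in>I. P (m i) \<and> m i \<inter> F0 = {}) \<and> (\<forall>i\<in>I. \<forall>j\<in>I. i \<noteq> j \<longrightarrow> m i \<inter> m j = {})"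
  using assms(1-3)
proof (induction I arbitrary: F0 rule: finite_induct)
  case empty then show ?case by simp
next
  case (insert i I)
  then have "card F0 < N" by simp
  then obtain e where e: "P e" "card e = 2" "e \<inter> F0 = {}" using avoid insert.prems(1) by blast
  then have "finite e" by (metis card.infinite zero_neq_numeral)
  have "card (F0 \<union> e) + 2 * card I \<le> N"
    using card_Un_le[of F0 e] e(2) insert by simp
  then obtain m where "\<forall>i\<in>I. P (m i) \<and> m i \<inter> (F0 \<union> e) = {}"
      "\<forall>i\<in>I. \<forall>j\<in>I. i \<noteq> j \<longrightarrow> m i \<inter> m j = {}"
    using insert.IH[of "F0 \<union> e"] insert.prems \<open>finite e\<close> by blast
  then show ?case
    using e insert.hyps by (intro exI[of _ "m(i := e)"]) (auto simp: disjoint_iff)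
qed

lemma exists_inj_choice_avoiding:
  assumes "finite J" "finite F" "\<forall>i\<in>J. finite (C i) \<and> card F + card J \<le> card (C i)"
  shows "\<exists>r. (\<forall>i\<in>J. r i \<in> C i - F) \<and> inj_on r J"
  using assms
proof (induction J arbitrary: F rule: finite_induct)
  case empty then show ?case by simp
next
  case (insert i J)
  have "card F < card (C i)" using insert by simp
  then have "\<not> C i \<subseteq> F" using card_mono[OF insert.prems(1), of "C i"] by linarith
  then obtain x where x: "x \<in> C i - F" by blast
  have "card (insert x F) \<le> Suc (card F)" by (simp add: card_insert_if insert.prems(1))
  then have "\<forall>j\<in>J. finite (C j) \<and> card (insert x F) + card J \<le> card (C j)"
    using insert by auto
  then obtain r where "\<forall>j\<in>J. r j \<in> C j - insert x F" "inj_on r J"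
    using insert.IH[of "insert x F"] insert.prems(1) by blast
  then show ?case
    using x insert.hyps by (intro exI[of _ "r(i := x)"]) (auto simp: inj_on_def)
qed

subsection \<open>Large minimum odd cycle covers\<close>

lemma has_pbm_if_large_odd_cycle_cover:
  assumes g: "graph V E" and X: "min_odd_cycle_cover V E X" and p: "partition2 V A B"
    and I: "I \<subseteq> {1..k}" and large: "2 * k + 2 * card I \<le> card X"
  shows "has_pbm E k s t I A B"
proof -
  define T where "T = s ` {1..k} \<union> t ` {1..k}"
  have bound: "card T + 2 * card I \<le> card X"
    using card_terminals_le[of s k t] large unfolding T_def by linarith
  have fin: "finite I" "finite T" using I finite_subset unfolding T_def by auto
  have avoid: "\<exists>e. (e \<in> E \<and> (e \<subseteq> A \<or> e \<subseteq> B)) \<and> card e = 2 \<and> e \<inter> F = {}"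
    if "finite F" "card F < card X" for F
    using edge_avoiding_if_card_less_min_odd_cycle_cover[OF X p that] graph_edgeD[OF g] by blast
  obtain m where "\<forall>i\<in>I. (m i \<in> E \<and> (m i \<subseteq> A \<or> m i \<subseteq> B)) \<and> m i \<inter> T = {}"
      "\<forall>i\<in>I. \<forall>j\<in>I. i \<noteq> j \<longrightarrow> m i \<inter> m j = {}"
    using exists_pairwise_disjoint_2_sets[OF fin bound avoid] by blast
  moreover have "{s j, t j} \<subseteq> T" if "j \<in> {1..k}" for j
    using that unfolding T_def by blast
  ultimately have "parity_breaking_matching E k s t I A B m"
    unfolding parity_breaking_matching_def by blast
  then show ?thesis unfolding has_pbm_def by blast
qed

subsection \<open>Small minimum odd cycle covers\<close>

lemma nice_partitions_agree_on_connected: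
  assumes n: "nice_partition_wrt V E A B X" and n': "nice_partition_wrt V E A' B' X'"
    and con: "connected_on E R" and R: "R \<subseteq> V - (X \<union> X')"
  shows "(\<forall>v\<in>R. v \<in> A \<longleftrightarrow> v \<in> A') \<or> (\<forall>v\<in>R. v \<in> A \<longleftrightarrow> v \<in> B')"
proof (cases "R = {}")
  case False
  then obtain r0 where r0: "r0 \<in> R" by blast
  have p: "A \<union> B = V" "A \<inter> B = {}" "A' \<union> B' = V" "A' \<inter> B' = {}"
    and ind: "independent E (A - X)" "independent E (B - X)"
      "independent E (A' - X')" "independent E (B' - X')"
    using n n' unfolding nice_partition_wrt_def partition2_def by auto
  have edge: "(x \<in> A \<longleftrightarrow> x \<in> A') = (y \<in> A \<longleftrightarrow> y \<in> A')"
    if "x \<in> R" "y \<in> R" "adj E x y" for x y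
  proof -
    have "x \<in> A \<longleftrightarrow> y \<notin> A" using that R p(1,2) ind(1,2) unfolding independent_def by blast
    moreover have "x \<in> A' \<longleftrightarrow> y \<notin> A'" using that R p(3,4) ind(3,4) unfolding independent_def by blast
    ultimately show ?thesis by blast
  qed
  have same: "(v \<in> A \<longleftrightarrow> v \<in> A') = (r0 \<in> A \<longleftrightarrow> r0 \<in> A')" if "v \<in> R" for v
  proof -
    have "(r0, v) \<in> {(x, y). x \<in> R \<and> y \<in> R \<and> adj E x y}\<^sup>*"
      using con r0 that unfolding connected_on_def by blast
    then show ?thesis by induction (use edge in auto)
  qed
  show ?thesis using same R p by blast
qed simp

text \<open>The first niceness condition handles vertices of the cover; the independence of B - X
  handles the others.\<close>
lemma nice_side_if_more_nbrs_opposite: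
  assumes g: "graph V E" and n: "nice_partition_wrt V E A B X" and R: "R \<subseteq> V - X"
    and v: "v \<in> V"
    and more: "card (nbrs E v \<inter> R \<inter> A) + card (V - R) < card (nbrs E v \<inter> R \<inter> B)"
  shows "v \<in> A"
proof -
  have p: "partition2 V A B" and indB: "independent E (B - X)"
    and cover_side: "\<forall>v\<in>X. card (nbrs E v \<inter> (B - X)) > card (nbrs E v \<inter> (A - X)) \<longrightarrow> v \<in> A"
    using n unfolding nice_partition_wrt_def by auto
  have fin: "finite (nbrs E v)" "finite V" using finite_nbrs[OF g] g unfolding graph_def by auto
  show ?thesis
  proof (cases "v \<in> X")
    case True
    have "card (nbrs E v \<inter> R \<inter> B) \<le> card (nbrs E v \<inter> (B - X))"
      using R fin by (intro card_mono) auto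
    moreover have "nbrs E v \<inter> (A - X) \<subseteq> (nbrs E v \<inter> R \<inter> A) \<union> (V - R)"
      using p unfolding partition2_def by blast
    then have "card (nbrs E v \<inter> (A - X)) \<le> card (nbrs E v \<inter> R \<inter> A) + card (V - R)"
      using fin by (intro card_le_if_subset_Un) auto
    ultimately show ?thesis using cover_side True more by fastforce
  next
    case False
    have "nbrs E v \<inter> R \<inter> B \<noteq> {}" using more by auto
    then obtain w where "w \<in> nbrs E v" "w \<in> R" "w \<in> B" by blast
    then show ?thesis
      using False v p indB R unfolding partition2_def independent_def nbrs_def by blast
  qed
qed

lemma nice_side_if_few_nbrs:
  assumes g: "graph V E" and conn: "k_connected V E n"
    and n: "nice_partition_wrt V E A B X" and R: "R \<subseteq> V - X" and v: "v \<in> V"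
    and few: "2 * (card (nbrs E v \<inter> R \<inter> A) + card (V - R)) < n"
  shows "v \<in> A"
proof (rule nice_side_if_more_nbrs_opposite[OF g n R v])
  have fin: "finite (nbrs E v)" "finite V" using finite_nbrs[OF g] g unfolding graph_def by auto
  have "nbrs E v \<subseteq> (nbrs E v \<inter> R \<inter> A) \<union> (nbrs E v \<inter> R \<inter> B) \<union> (V - R)"
    using nbrs_subset[OF g] n unfolding nice_partition_wrt_def partition2_def by blast
  then have "card (nbrs E v) \<le> card ((nbrs E v \<inter> R \<inter> A) \<union> (nbrs E v \<inter> R \<inter> B)) + card (V - R)"
    using fin by (intro card_le_if_subset_Un) auto
  then have "card (nbrs E v) \<le> card (nbrs E v \<inter> R \<inter> A) + card (nbrs E v \<inter> R \<inter> B) + card (V - R)"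
    using card_Un_le[of "nbrs E v \<inter> R \<inter> A" "nbrs E v \<inter> R \<inter> B"] by linarith
  then show "card (nbrs E v \<inter> R \<inter> A) + card (V - R) < card (nbrs E v \<inter> R \<inter> B)"
    using card_nbrs_ge_if_k_connected[OF g conn v] few unfolding distrib_left by linarith
qed

lemma nice_partitions_agree_if_unbalanced:
  assumes g: "graph V E" and conn: "k_connected V E n"
    and n: "nice_partition_wrt V E A B X" and n': "nice_partition_wrt V E A' B' X'"
    and R: "R \<subseteq> V - (X \<union> X')" and agree: "\<forall>w\<in>R. w \<in> A \<longleftrightarrow> w \<in> A'"
    and bound: "2 * (K + card (V - R)) < n" and v: "v \<in> V"
    and unbalanced: "card (nbrs E v \<inter> R \<inter> A) \<le> K \<or> card (nbrs E v \<inter> R \<inter> B) \<le> K"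
  shows "v \<in> A \<longleftrightarrow> v \<in> A'"
proof -
  have p: "partition2 V A B" "partition2 V A' B'"
    using n n' unfolding nice_partition_wrt_def by auto
  have same_nbrs: "nbrs E v \<inter> R \<inter> A' = nbrs E v \<inter> R \<inter> A"
      "nbrs E v \<inter> R \<inter> B' = nbrs E v \<inter> R \<inter> B"
    using agree R p unfolding partition2_def by blast+
  have R_avoids: "R \<subseteq> V - X" "R \<subseteq> V - X'" using R by auto
  note side = nice_side_if_few_nbrs[OF g conn _ _ v]
  from unbalanced consider (few_A) "card (nbrs E v \<inter> R \<inter> A) \<le> K"
    | (few_B) "card (nbrs E v \<inter> R \<inter> B) \<le> K" by blast
  then show ?thesis
  proof cases
    case few_A
    then have "v \<in> A" "v \<in> A'"
      using side[OF n R_avoids(1)] side[OF n' R_avoids(2)] same_nbrs bound by simp_all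
    then show ?thesis by blast
  next
    case few_B
    then have "v \<in> B" "v \<in> B'"
      using side[OF nice_partition_wrt_swap[OF n] R_avoids(1)]
        side[OF nice_partition_wrt_swap[OF n'] R_avoids(2)] same_nbrs bound by simp_all
    then show ?thesis using p unfolding partition2_def by blast
  qed
qed

lemma parity_breaking_matching_reroute:
  assumes m: "parity_breaking_matching E k s t I A B m"
    and edges: "\<forall>i\<in>I. m' i \<in> E \<and> (m' i \<subseteq> A' \<or> m' i \<subseteq> B')"
    and J: "J \<subseteq> I" "\<forall>i\<in>I - J. m' i \<subseteq> m i" "\<forall>i\<in>J. m' i \<subseteq> insert (r i) (m i)"
    and r: "inj_on r J" "\<forall>i\<in>J. r i \<notin> (\<Union>j\<in>I. m j) \<union> (s ` {1..k} \<union> t ` {1..k})"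
  shows "parity_breaking_matching E k s t I A' B' m'"
proof -
  have sub: "m' i \<subseteq> m i \<union> r ` ({i} \<inter> J)" if "i \<in> I" for i
    using J that by (cases "i \<in> J") auto
  have "m' i \<inter> m' j = {}" if "i \<in> I" "j \<in> I" "i \<noteq> j" for i j
  proof -
    have "m i \<inter> m j = {}" using m that unfolding parity_breaking_matching_def by blast
    moreover have "r ` ({i} \<inter> J) \<inter> m j = {}" "m i \<inter> r ` ({j} \<inter> J) = {}"
      using r(2) that by auto
    moreover have "r ` ({i} \<inter> J) \<inter> r ` ({j} \<inter> J) = {}"
      using r(1) that by (auto simp: inj_on_def)
    ultimately have "(m i \<union> r ` ({i} \<inter> J)) \<inter> (m j \<union> r ` ({j} \<inter> J)) = {}"
      by (simp add: Int_Un_distrib Int_Un_distrib2)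
    then show ?thesis using Int_mono[OF sub[OF that(1)] sub[OF that(2)]] by blast
  qed
  moreover have "m' i \<inter> {s j, t j} = {}" if "i \<in> I" "j \<in> {1..k}" "j \<noteq> i" for i j
  proof -
    have "m i \<inter> {s j, t j} = {}" using m that unfolding parity_breaking_matching_def by blast
    moreover have "s j \<in> s ` {1..k}" "t j \<in> t ` {1..k}" using imageI[OF that(2)] by auto
    then have "r ` ({i} \<inter> J) \<inter> {s j, t j} = {}" using r(2) by fastforce
    ultimately show ?thesis using sub[OF that(1)] by blast
  qed
  ultimately show ?thesis using edges unfolding parity_breaking_matching_def by blast
qed

text \<open>A matching edge with an endpoint u that has more than K neighbours in R on both sides
  is replaced by an edge from u to a fresh R-neighbour on u's side; there are enough of them
  because the terminals and the matching use at most 2k + 2|I| vertices.\<close>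
lemma has_pbm_if_agree_on_unbalanced:
  assumes g: "graph V E" and p: "partition2 V A B" and p': "partition2 V A' B'"
    and I: "I \<subseteq> {1..k}" and R: "R \<subseteq> V" and agree: "\<forall>w\<in>R. w \<in> A \<longleftrightarrow> w \<in> A'"
    and unbalanced: "\<forall>v\<in>V. card (nbrs E v \<inter> R \<inter> A) \<le> K \<or> card (nbrs E v \<inter> R \<inter> B) \<le> K
                         \<longrightarrow> (v \<in> A \<longleftrightarrow> v \<in> A')"
    and K: "2 * k + 3 * card I \<le> K"
    and m: "parity_breaking_matching E k s t I A B m"
  shows "has_pbm E k s t I A' B'"
proof -
  have fI: "finite I" using I finite_subset by blast
  have mE: "\<forall>i\<in>I. m i \<in> E \<and> (m i \<subseteq> A \<or> m i \<subseteq> B)"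
    using m unfolding parity_breaking_matching_def by blast
  then have mV: "m i \<subseteq> V" "card (m i) = 2" "finite (m i)" if "i \<in> I" for i
    using graph_edgeD[OF g] that by auto
  define bal where "bal u \<longleftrightarrow> K < card (nbrs E u \<inter> R \<inter> A) \<and> K < card (nbrs E u \<inter> R \<inter> B)" for u
  define J where "J = {i\<in>I. \<exists>u\<in>m i. bal u}"
  define u where "u i = (SOME x. x \<in> m i \<and> bal x)" for i
  have u: "u i \<in> m i" "bal (u i)" if "i \<in> J" for i
    using that someI_ex[of "\<lambda>x. x \<in> m i \<and> bal x"] unfolding J_def u_def by auto
  define C where "C i = nbrs E (u i) \<inter> R \<inter> (if u i \<in> A' then A' else B')" for i
  define F where "F = (\<Union>i\<in>I. m i) \<union> (s ` {1..k} \<union> t ` {1..k})"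
  have "card (\<Union>i\<in>I. m i) \<le> 2 * card I"
    using card_UN_le[OF fI, of m] mV by simp
  then have "card F \<le> 2 * card I + 2 * k"
    using card_Un_le[of "\<Union>i\<in>I. m i" "s ` {1..k} \<union> t ` {1..k}"] card_terminals_le[of s k t]
    unfolding F_def by linarith
  moreover have "J \<subseteq> I" unfolding J_def by blast
  then have "finite J" "card J \<le> card I" using fI by (auto intro: finite_subset card_mono)
  moreover have "R \<inter> A' = R \<inter> A" "R \<inter> B' = R \<inter> B"
    using R agree p p' unfolding partition2_def by blast+
  then have "finite (C i)" "K < card (C i)" if "i \<in> J" for i
    using finite_nbrs[OF g] u[OF that] unfolding C_def bal_def by (simp_all add: Int_assoc)
  ultimately have "\<forall>i\<in>J. finite (C i) \<and> card F + card J \<le> card (C i)"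
    using K by fastforce
  moreover have "finite F" using fI mV unfolding F_def by auto
  ultimately obtain r where r: "\<forall>i\<in>J. r i \<in> C i - F" "inj_on r J"
    using exists_inj_choice_avoiding[of J F C] \<open>finite J\<close> by blast
  define m' where "m' i = (if i \<in> J then {u i, r i} else m i)" for i
  have edges: "\<forall>i\<in>I. m' i \<in> E \<and> (m' i \<subseteq> A' \<or> m' i \<subseteq> B')"
  proof
    fix i assume i: "i \<in> I"
    show "m' i \<in> E \<and> (m' i \<subseteq> A' \<or> m' i \<subseteq> B')"
    proof (cases "i \<in> J")
      case True
      then have ri: "r i \<in> C i" using r(1) by blast
      then have "{u i, r i} \<in> E" unfolding C_def nbrs_def adj_def by simp
      moreover have "u i \<in> V" using mV[OF i] u[OF True] by auto
      moreover have "r i \<in> (if u i \<in> A' then A' else B')" using ri unfolding C_def by simp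
      ultimately show ?thesis using True p' unfolding m'_def partition2_def by (auto split: if_splits)
    next
      case False
      have same_side: "v \<in> A \<longleftrightarrow> v \<in> A'" if "v \<in> m i" for v
      proof -
        have "\<not> bal v" "v \<in> V" using False i that mV(1)[OF i] unfolding J_def by auto
        then have "card (nbrs E v \<inter> R \<inter> A) \<le> K \<or> card (nbrs E v \<inter> R \<inter> B) \<le> K"
          unfolding bal_def by linarith
        then show ?thesis using unbalanced \<open>v \<in> V\<close> by blast
      qed
      then show ?thesis
        using subset_class_if_agree[OF p p' mV(1)[OF i]] mE i False unfolding m'_def by auto
    qed
  qed
  have "\<forall>i\<in>I - J. m' i \<subseteq> m i" "\<forall>i\<in>J. m' i \<subseteq> insert (r i) (m i)"
    using u unfolding m'_def by auto
  moreover have "\<forall>i\<in>J. r i \<notin> (\<Union>j\<in>I. m j) \<union> (s ` {1..k} \<union> t ` {1..k})"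
    using r(1) unfolding F_def by blast
  ultimately have "parity_breaking_matching E k s t I A' B' m'"
    using parity_breaking_matching_reroute[OF m edges \<open>J \<subseteq> I\<close> _ _ r(2)] by blast
  then show ?thesis unfolding has_pbm_def by blast
qed

lemma has_pbm_if_small_odd_cycle_cover:
  assumes g: "graph V E" and conn: "k_connected V E n"
    and n: "nice_partition_wrt V E A B X" and n': "nice_partition_wrt V E A' B' X'"
    and I: "I \<subseteq> {1..k}" and small: "4 * card X + 4 * k + 6 * card I < n"
    and m: "parity_breaking_matching E k s t I A B m"
  shows "has_pbm E k s t I A' B'"
proof -
  have X: "min_odd_cycle_cover V E X" "min_odd_cycle_cover V E X'"
    using n n' unfolding nice_partition_wrt_def by auto
  then have XV: "X \<union> X' \<subseteq> V" unfolding min_odd_cycle_cover_def odd_cycle_cover_def by auto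
  define R where "R = V - (X \<union> X')"
  have cardVR: "card (V - R) \<le> 2 * card X"
    using card_Un_le[of X X'] card_min_odd_cycle_cover_eq[OF X] XV unfolding R_def
    by (simp add: Diff_Diff_Int Int_absorb1)
  then have "connected_on E R"
    using conn small XV unfolding R_def k_connected_def by (simp add: Diff_Diff_Int Int_absorb1)
  have bound: "2 * (2 * k + 3 * card I + card (V - R)) < n"
    using cardVR small unfolding distrib_left by linarith
  have "R \<subseteq> V - (X \<union> X')" "R \<subseteq> V" unfolding R_def by auto
  have aligned: "has_pbm E k s t I A'' B''"
    if n'': "nice_partition_wrt V E A'' B'' X'" and agree: "\<forall>w\<in>R. w \<in> A \<longleftrightarrow> w \<in> A''" for A'' B''
  proof (rule has_pbm_if_agree_on_unbalanced[OF g _ _ I \<open>R \<subseteq> V\<close> agree _ order_refl m])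
    show "partition2 V A B" "partition2 V A'' B''"
      using n n'' unfolding nice_partition_wrt_def by auto
    show "\<forall>v\<in>V. card (nbrs E v \<inter> R \<inter> A) \<le> 2 * k + 3 * card I \<or>
        card (nbrs E v \<inter> R \<inter> B) \<le> 2 * k + 3 * card I \<longrightarrow> (v \<in> A \<longleftrightarrow> v \<in> A'')"
      using nice_partitions_agree_if_unbalanced[OF g conn n n'' \<open>R \<subseteq> V - (X \<union> X')\<close> agree bound]
      by blast
  qed
  show ?thesis
    using nice_partitions_agree_on_connected[OF n n' \<open>connected_on E R\<close>]
      aligned[OF n'] aligned[OF nice_partition_wrt_swap[OF n']] has_pbm_swap
    unfolding R_def by blast
qed

theorem corollary5:
  fixes V :: "'a set" and E :: "'a set set" and k :: nat and I :: "nat set"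
    and s t :: "nat \<Rightarrow> 'a"
  assumes "graph V E"
    and "k \<ge> 1"
    and "I \<subseteq> {1..k}"
    and "k_connected V E (26 * k + 24 * card I)"
    and "s ` {1..k} \<subseteq> V" and "t ` {1..k} \<subseteq> V"
    and "inj_on s {1..k}" and "inj_on t {1..k}"
    and "s ` {1..k} \<inter> t ` {1..k} = {}"
  shows "(\<exists>A B. nice_partition V E A B \<and> has_pbm E k s t I A B) \<longleftrightarrow>
         (\<forall>A B. nice_partition V E A B \<longrightarrow> has_pbm E k s t I A B)"
proof
  assume "\<exists>A B. nice_partition V E A B \<and> has_pbm E k s t I A B"
  then obtain A0 B0 X0 m where n0: "nice_partition_wrt V E A0 B0 X0"
      and m: "parity_breaking_matching E k s t I A0 B0 m"
    unfolding has_pbm_def nice_partition_iff_wrt by blast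
  show "\<forall>A B. nice_partition V E A B \<longrightarrow> has_pbm E k s t I A B"
  proof (intro allI impI)
    fix A B assume "nice_partition V E A B"
    then obtain X where n: "nice_partition_wrt V E A B X" using nice_partition_iff_wrt by blast
    then have X: "min_odd_cycle_cover V E X" "partition2 V A B"
      unfolding nice_partition_wrt_def by auto
    show "has_pbm E k s t I A B"
    proof (cases "2 * k + 2 * card I \<le> card X")
      case True
      then show ?thesis using has_pbm_if_large_odd_cycle_cover[OF assms(1) X assms(3)] by blast
    next
      case False
      moreover have "card X0 = card X"
        using n0 X card_min_odd_cycle_cover_eq unfolding nice_partition_wrt_def by blast
      ultimately show ?thesis
        using has_pbm_if_small_odd_cycle_cover[OF assms(1,4) n0 n assms(3) _ m] by linarith
    qed
  qed
qed (use nice_partition_exists in blast)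

end
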